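(* Let $V$ be a Majorana representation with identity $\mathbb 1$ satisfying axiom M2'. Let $x_1,\dots,x_k\in V$ be idempotents, $\lambda_1,\dots,\lambda_k\in\mathbb R$, and suppose $x=\sum_{i=1}^k\lambda_i x_i$ is also an idempotent. Then $l(x)=\sum_{i=1}^k \lambda_i\, l(x_i)$, where $l(v):=(v,v)$.
   Context: A transposition group $(G,T)$ is a finite group $G$ with a $G$-stable set $T$ of involutions generating $G$. A Majorana representation of $(G,T)$ is a quintuple $(G,T,V,\varphi,\psi)$ where $V$ is a commutative non-associative real algebra with a (positive definite) inner product $(\,,)$, $\varphi:G\to GL(V)$ is a representation with $\varphi(G)\le \mathrm{Aut}(V)$, and $\psi:T\to V\setminus\{0\}$ is injective with $\psi(t^g)=\psi(t)^{\varphi(g)}$, such that: (M1) $(u,v\cdot w)=(u\cdot v,w)$ for all $u,v,w$; (M2) $(u\cdot u,v\cdot v)\ge (u\cdot v,u\cdot v)$ for all $u,v$; (M3) elements of $\psi(T)$ (Majorana axes) are idempotents of length $1$; (M4) each Majorana axis $a$ has $\mathrm{ad}_a:u\mapsto a\cdot u$ diagonalizable with eigenvalues in $\{0,1,\frac1{4},\frac1{32}\}$; (M5) $1$ is a simple eigenvalue of each Majorana axis; (M6) for each axis $a$ the linear map $\tau(a)$ acting as $(-1)^{32\mu}$ on the $\mu$-eigenspace of $\mathrm{ad}_a$ is an algebra automorphism; (M7) for each axis $a$ the map $\sigma(a)$ on $C_V(\tau(a))$ acting as $(-1)^{4\mu}$ on the $\mu$-eigenspaces, $\mu\ne\frac1{32}$,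 preserves the product of $C_V(\tau(a))$; (M8) $\tau(\psi(t))=\varphi(t)$ for all $t\in T$. Axiom M2': the Norton inequality holds for all $u,v$, with equality precisely when $\mathrm{ad}_u$ and $\mathrm{ad}_v$ commute. *)

theory Defs
  imports "HOL-Analysis.Analysis" "HOL-Algebra.Generated_Groups"
begin

text \<open>The algebra V is modelled as a real inner product space (type class real_inner,
 positive definite inner product), with a bilinear commutative product prd.\<close>

definition eigsp :: "('v::real_vector \<Rightarrow> 'v \<Rightarrow> 'v) \<Rightarrow> 'v \<Rightarrow> real \<Rightarrow> 'v set" where
  "eigsp prd a \<mu> = {v. prd a v = \<mu> *\<^sub>R v}"

definition axis_diag :: "('v::real_vector \<Rightarrow> 'v \<Rightarrow> 'v) \<Rightarrow> 'v \<Rightarrow> bool" where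
  "axis_diag prd a \<longleftrightarrow> (\<forall>v. \<exists>v0 v1 v4 v32. v0 \<in> eigsp prd a 0 \<and> v1 \<in> eigsp prd a 1 \<and>
      v4 \<in> eigsp prd a (1/4) \<and> v32 \<in> eigsp prd a (1/32) \<and> v = v0 + v1 + v4 + v32)"

text \<open>tau(a): acts as (-1)^(32 mu) on the mu-eigenspace.\<close>
definition tau_map :: "('v::real_vector \<Rightarrow> 'v \<Rightarrow> 'v) \<Rightarrow> 'v \<Rightarrow> 'v \<Rightarrow> 'v" where
  "tau_map prd a v = (SOME w. \<exists>v0 v1 v4 v32. v0 \<in> eigsp prd a 0 \<and> v1 \<in> eigsp prd a 1 \<and>
      v4 \<in> eigsp prd a (1/4) \<and> v32 \<in> eigsp prd a (1/32) \<and> v = v0 + v1 + v4 + v32 \<and>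
      w = v0 + v1 + v4 - v32)"

text \<open>sigma(a): acts as (-1)^(4 mu) on the mu-eigenspaces (mu /= 1/32); used on C_V(tau(a)).\<close>
definition sigma_map :: "('v::real_vector \<Rightarrow> 'v \<Rightarrow> 'v) \<Rightarrow> 'v \<Rightarrow> 'v \<Rightarrow> 'v" where
  "sigma_map prd a v = (SOME w. \<exists>v0 v1 v4. v0 \<in> eigsp prd a 0 \<and> v1 \<in> eigsp prd a 1 \<and>
      v4 \<in> eigsp prd a (1/4) \<and> v = v0 + v1 + v4 \<and> w = v0 + v1 - v4)"

definition alg_aut :: "('v::real_vector \<Rightarrow> 'v \<Rightarrow> 'v) \<Rightarrow> ('v \<Rightarrow> 'v) \<Rightarrow> bool" where
  "alg_aut prd f \<longleftrightarrow> linear f \<and> bij f \<and> (\<forall>u v. f (prd u v) = prd (f u) (f v))"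

definition transposition_group :: "('g, 'b) monoid_scheme \<Rightarrow> 'g set \<Rightarrow> bool" where
  "transposition_group G T \<longleftrightarrow> group G \<and> finite (carrier G) \<and> T \<subseteq> carrier G \<and>
     (\<forall>t\<in>T. t \<noteq> \<one>\<^bsub>G\<^esub> \<and> t \<otimes>\<^bsub>G\<^esub> t = \<one>\<^bsub>G\<^esub>) \<and>
     (\<forall>t\<in>T. \<forall>g\<in>carrier G. inv\<^bsub>G\<^esub> g \<otimes>\<^bsub>G\<^esub> t \<otimes>\<^bsub>G\<^esub> g \<in> T) \<and>
     generate G T = carrier G"

text \<open>Majorana representation (G,T,V,phi,psi); actions are right actions as in the paper:
 v^(phi g) is written phi g v, so phi (g h) = phi h o phi g, and t^g = g^-1 t g.\<close>
definition majorana_rep ::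
  "('g, 'b) monoid_scheme \<Rightarrow> 'g set \<Rightarrow> ('v::real_inner \<Rightarrow> 'v \<Rightarrow> 'v) \<Rightarrow> ('g \<Rightarrow> 'v \<Rightarrow> 'v) \<Rightarrow> ('g \<Rightarrow> 'v) \<Rightarrow> bool" where
  "majorana_rep G T prd \<phi> \<psi> \<longleftrightarrow>
     transposition_group G T \<and>
     bilinear prd \<and> (\<forall>u v. prd u v = prd v u) \<and>
     (\<forall>g\<in>carrier G. alg_aut prd (\<phi> g)) \<and>
     (\<forall>g\<in>carrier G. \<forall>h\<in>carrier G. \<phi> (g \<otimes>\<^bsub>G\<^esub> h) = \<phi> h \<circ> \<phi> g) \<and>
     inj_on \<psi> T \<and> (\<forall>t\<in>T. \<psi> t \<noteq> 0) \<and>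
     (\<forall>t\<in>T. \<forall>g\<in>carrier G. \<psi> (inv\<^bsub>G\<^esub> g \<otimes>\<^bsub>G\<^esub> t \<otimes>\<^bsub>G\<^esub> g) = \<phi> g (\<psi> t)) \<and>
     \<comment> \<open>M1\<close>
     (\<forall>u v w. inner u (prd v w) = inner (prd u v) w) \<and>
     \<comment> \<open>M2\<close>
     (\<forall>u v. inner (prd u u) (prd v v) \<ge> inner (prd u v) (prd u v)) \<and>
     \<comment> \<open>M3\<close>
     (\<forall>t\<in>T. prd (\<psi> t) (\<psi> t) = \<psi> t \<and> inner (\<psi> t) (\<psi> t) = 1) \<and>
     \<comment> \<open>M4\<close>
     (\<forall>t\<in>T. axis_diag prd (\<psi> t)) \<and>
     \<comment> \<open>M5\<close>
     (\<forall>t\<in>T. eigsp prd (\<psi> t) 1 = range (\<lambda>c. c *\<^sub>R \<psi> t)) \<and>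
     \<comment> \<open>M6\<close>
     (\<forall>t\<in>T. alg_aut prd (tau_map prd (\<psi> t))) \<and>
     \<comment> \<open>M7\<close>
     (\<forall>t\<in>T. \<forall>u v. tau_map prd (\<psi> t) u = u \<longrightarrow> tau_map prd (\<psi> t) v = v \<longrightarrow>
        sigma_map prd (\<psi> t) (prd u v) = prd (sigma_map prd (\<psi> t) u) (sigma_map prd (\<psi> t) v)) \<and>
     \<comment> \<open>M8\<close>
     (\<forall>t\<in>T. tau_map prd (\<psi> t) = \<phi> t)"

definition axiom_M2' :: "('v::real_inner \<Rightarrow> 'v \<Rightarrow> 'v) \<Rightarrow> bool" where
  "axiom_M2' prd \<longleftrightarrow> (\<forall>u v. inner (prd u u) (prd v v) \<ge> inner (prd u v) (prd u v) \<and>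
     (inner (prd u u) (prd v v) = inner (prd u v) (prd u v) \<longleftrightarrow>
        prd u \<circ> prd v = prd v \<circ> prd u))"

definition l_len :: "'v::real_inner \<Rightarrow> real" where
  "l_len v = inner v v"

end

theory Submission
  imports Defs
begin

text \<open>By associativity of the form, \<open>(y, y) = (y, y\<cdot>\<one>) = (y\<cdot>y, \<one>)\<close>, so on idempotents the
  length \<open>l\<close> coincides with the linear functional \<open>(\<cdot>, \<one>)\<close>; hence it is additive along any
  linear combination of idempotents that is itself idempotent.\<close>

lemma inner_square_unit:
  fixes prd :: "'v::real_inner \<Rightarrow> 'v \<Rightarrow> 'v" and one :: 'v
  assumes assoc_form: "\<And>u v w. inner u (prd v w) = inner (prd u v) w"
    and right_unit: "\<And>v. prd v one = v"
  shows "inner (prd y y) one = inner y y"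
  using assoc_form[of y y one] by (simp add: right_unit)

lemma l_len_idempotent:
  fixes prd :: "'v::real_inner \<Rightarrow> 'v \<Rightarrow> 'v" and one :: 'v
  assumes assoc_form: "\<And>u v w. inner u (prd v w) = inner (prd u v) w"
    and right_unit: "\<And>v. prd v one = v"
    and idem: "prd y y = y"
  shows "l_len y = inner y one"
  using inner_square_unit[of prd one y, OF assoc_form right_unit] idem
  by (simp add: l_len_def)

theorem mainTheorem3:
  fixes G :: "('g, 'b) monoid_scheme" and T :: "'g set"
    and prd :: "'v::real_inner \<Rightarrow> 'v \<Rightarrow> 'v"
    and \<phi> :: "'g \<Rightarrow> 'v \<Rightarrow> 'v" and \<psi> :: "'g \<Rightarrow> 'v"
    and one :: 'v and k :: nat and x :: "nat \<Rightarrow> 'v" and lam :: "nat \<Rightarrow> real"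
  assumes "majorana_rep G T prd \<phi> \<psi>"
    and "\<forall>v. prd one v = v"
    and "axiom_M2' prd"
    and "\<forall>i\<in>{1..k}. prd (x i) (x i) = x i"
    and "prd (\<Sum>i=1..k. lam i *\<^sub>R x i) (\<Sum>i=1..k. lam i *\<^sub>R x i) = (\<Sum>i=1..k. lam i *\<^sub>R x i)"
  shows "l_len (\<Sum>i=1..k. lam i *\<^sub>R x i) = (\<Sum>i=1..k. lam i * l_len (x i))"
proof -
  have assoc_form: "\<And>u v w. inner u (prd v w) = inner (prd u v) w"
    and comm: "\<And>u v. prd u v = prd v u"
    using assms(1) unfolding majorana_rep_def by auto
  have right_unit: "\<And>v. prd v one = v"
    using assms(2) comm by metis
  note l_len_one = l_len_idempotent[OF assoc_form right_unit]
  have "l_len (\<Sum>i=1..k. lam i *\<^sub>R x i) = inner (\<Sum>i=1..k. lam i *\<^sub>R x i) one"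
    using l_len_one assms(5) .
  also have "\<dots> = (\<Sum>i=1..k. lam i * inner (x i) one)"
    by (simp add: inner_sum_left)
  also have "\<dots> = (\<Sum>i=1..k. lam i * l_len (x i))"
    using l_len_one assms(4) by (intro sum.cong) auto
  finally show ?thesis .
qed

end
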